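(* For all integers $n\ge 1$ and $k\ge 2$, $$d_k(n+1)=d_{k-2}(n)+3\,d_{k-1}(n)+d_k(n)+2\,s_k(n).$$
   Context: For $n\ge 1$, the $2\times n$ board consists of $2n$ unit squares $x_0,\dots,x_{2n-1}$ arranged in 2 rows and $n$ columns, labeled with the top row first (left to right, $x_0,\dots,x_{n-1}$... ) — more precisely, labeled so that $x_{2i}$ and $x_{2i+1}$ form column $i$ ($i=0,\dots,n-1$), with $x_{2n-2},x_{2n-1}$ the two squares of the rightmost column. Two squares are adjacent iff they share an edge. A piece is a nonempty set of squares that is connected under adjacency. A division of the board into $k$ pieces is a partition of the set of all $2n$ squares into exactly $k$ pieces. $d_k(n)$ denotes the number of divisions of the $2\times n$ board into $k$ pieces (so $d_0(n)=0$, $d_1(n)=1$). $s_k(n)$ denotes the number of such divisions in which the two squares of the rightmost column lie in different pieces. *)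

theory Defs
  imports Main
begin

text \<open>Squares of the 2 x n board are the naturals 0,...,2n-1; square j lies in
column j div 2 and row j mod 2, so x_{2i}, x_{2i+1} form column i.\<close>

definition board :: "nat \<Rightarrow> nat set" where
  "board n = {..<2*n}"

definition adjacent :: "nat \<Rightarrow> nat \<Rightarrow> bool" where
  "adjacent i j \<longleftrightarrow>
     (i div 2 = j div 2 \<and> i \<noteq> j) \<or>
     (i mod 2 = j mod 2 \<and> (i div 2 + 1 = j div 2 \<or> j div 2 + 1 = i div 2))"

definition connected_set :: "nat set \<Rightarrow> bool" where
  "connected_set A \<longleftrightarrow>
     (\<forall>x\<in>A. \<forall>y\<in>A. (x, y) \<in> {(a, b). a \<in> A \<and> b \<in> A \<and> adjacent a b}\<^sup>*)"

definition piece :: "nat set \<Rightarrow> bool" where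
  "piece A \<longleftrightarrow> A \<noteq> {} \<and> connected_set A"

definition division :: "nat \<Rightarrow> nat \<Rightarrow> nat set set \<Rightarrow> bool" where
  "division n k P \<longleftrightarrow>
     \<Union>P = board n \<and>
     (\<forall>A\<in>P. \<forall>B\<in>P. A \<noteq> B \<longrightarrow> A \<inter> B = {}) \<and>
     (\<forall>A\<in>P. piece A) \<and>
     finite P \<and> card P = k"

definition d :: "nat \<Rightarrow> nat \<Rightarrow> nat" where
  "d k n = card {P. division n k P}"

definition s :: "nat \<Rightarrow> nat \<Rightarrow> nat" where
  "s k n = card {P. division n k P \<and>
                    (\<forall>A\<in>P. \<not> (2*n - 2 \<in> A \<and> 2*n - 1 \<in> A))}"

end

theory Submission
  imports Defs
begin

text \<open>Deleting the last column of a division of the 2 x (n+1) board leaves a division of the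
  2 x n board, because a piece can only pass through the last column between the squares 2n-2
  and 2n-1, which are adjacent. Conversely, the division is recovered from its restriction by
  one of seven ways of placing the squares 2n and 2n+1: as two new singletons (two more pieces);
  as a new domino, or as a new singleton with the other square joining the piece to its left
  (one more piece, three ways); or without new pieces, with the domino joining the piece of 2n-2,
  which is always possible, or with each square joining the piece of its left neighbour, or the
  domino joining the piece of 2n-1 alone, which are possible and give different divisions exactly
  when 2n-2 and 2n-1 lie in different pieces. Every division of the larger board arises in
  exactly one of these ways, whence d_{k-2}(n) + 3 d_{k-1}(n) + d_k(n) + 2 s_k(n).\<close>

section \<open>Connectivity\<close>

definition adj_within :: "nat set \<Rightarrow> nat rel" where
  "adj_within A = {(a, b). a \<in> A \<and> b \<in> A \<and> adjacent a b}"

lemma connected_set_iff: "connected_set A \<longleftrightarrow> (\<forall>x\<in>A. \<forall>y\<in>A. (x, y) \<in> (adj_within A)\<^sup>*)"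
  unfolding connected_set_def adj_within_def by simp

lemma adjacent_sym: "adjacent x y \<Longrightarrow> adjacent y x"
  unfolding adjacent_def by auto

lemma adj_within_rtrancl_mono: "A \<subseteq> B \<Longrightarrow> (x, y) \<in> (adj_within A)\<^sup>* \<Longrightarrow> (x, y) \<in> (adj_within B)\<^sup>*"
  by (rule rtrancl_mono[THEN subsetD]) (auto simp: adj_within_def)

lemma adj_within_rtrancl_sym: "(x, y) \<in> (adj_within A)\<^sup>* \<Longrightarrow> (y, x) \<in> (adj_within A)\<^sup>*"
  by (rule symD[OF sym_rtrancl]) (auto simp: sym_def adj_within_def intro: adjacent_sym)

lemma connected_set_Un:
  assumes "connected_set X" "connected_set Y" "x \<in> X" "y \<in> Y" "adjacent x y"
  shows "connected_set (X \<union> Y)"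
proof -
  have X: "(u, v) \<in> (adj_within (X \<union> Y))\<^sup>*" if "u \<in> X" "v \<in> X" for u v
    using assms(1) that by (auto simp: connected_set_iff intro: adj_within_rtrancl_mono[of X])
  have Y: "(u, v) \<in> (adj_within (X \<union> Y))\<^sup>*" if "u \<in> Y" "v \<in> Y" for u v
    using assms(2) that by (auto simp: connected_set_iff intro: adj_within_rtrancl_mono[of Y])
  have "(x, y) \<in> adj_within (X \<union> Y)"
    using assms(3-5) by (auto simp: adj_within_def)
  then have XY: "(u, v) \<in> (adj_within (X \<union> Y))\<^sup>*" if "u \<in> X" "v \<in> Y" for u v
    by (meson X Y assms(3,4) that r_into_rtrancl rtrancl_trans)
  show ?thesis
    unfolding connected_set_iff using X Y XY adj_within_rtrancl_sym by blast
qed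

lemma piece_singleton: "piece {x}"
  by (simp add: piece_def connected_set_iff)

lemma piece_adjacent_pair: "adjacent x y \<Longrightarrow> piece {x, y}"
  using connected_set_Un[of "{x}" "{y}" x y] piece_singleton by (simp add: piece_def insert_commute)

lemma connected_set_crossing_edge:
  assumes "connected_set A" "x \<in> A" "x \<in> S" "y \<in> A" "y \<notin> S"
  shows "\<exists>u\<in>A \<inter> S. \<exists>w\<in>A - S. adjacent u w"
proof -
  have "(x, y) \<in> (adj_within A)\<^sup>*"
    using assms connected_set_iff by blast
  then show ?thesis
    using assms(5)
  proof (induction rule: rtrancl_induct)
    case base
    then show ?case using assms(3) by simp
  next
    case (step y z)
    then show ?case by (cases "y \<in> S") (auto simp: adj_within_def)
  qed
qed

section \<open>Partitions into pieces\<close>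

definition piece_partition :: "nat set \<Rightarrow> nat set set \<Rightarrow> bool" where
  "piece_partition U P \<longleftrightarrow>
     \<Union>P = U \<and> (\<forall>A\<in>P. \<forall>B\<in>P. A \<noteq> B \<longrightarrow> A \<inter> B = {}) \<and> (\<forall>A\<in>P. piece A) \<and> finite P"

lemma division_iff: "division n k P \<longleftrightarrow> piece_partition (board n) P \<and> card P = k"
  unfolding division_def piece_partition_def by auto

lemma piece_partitionD:
  assumes "piece_partition U P" "A \<in> P"
  shows "A \<noteq> {}" "A \<subseteq> U" "connected_set A"
  using assms unfolding piece_partition_def piece_def by auto

lemma piece_partition_unique:
  "piece_partition U P \<Longrightarrow> A \<in> P \<Longrightarrow> B \<in> P \<Longrightarrow> x \<in> A \<Longrightarrow> x \<in> B \<Longrightarrow> A = B"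
  unfolding piece_partition_def by blast

lemma piece_partition_cover: "piece_partition U P \<Longrightarrow> x \<in> U \<Longrightarrow> \<exists>A\<in>P. x \<in> A"
  unfolding piece_partition_def by auto

lemma finite_divisions: "finite {P. division n k P}"
proof (rule finite_subset)
  show "{P. division n k P} \<subseteq> Pow (Pow (board n))"
    unfolding division_def by blast
  show "finite (Pow (Pow (board n)))"
    unfolding board_def by simp
qed

lemma piece_partition_subset_eq:
  assumes P: "piece_partition U P" and P': "piece_partition U P'" and "P' \<subseteq> P"
  shows "P' = P"
proof
  show "P \<subseteq> P'"
  proof
    fix B assume B: "B \<in> P"
    then obtain x where "x \<in> B" using piece_partitionD(1)[OF P] by blast
    moreover then obtain A where "A \<in> P'" "x \<in> A"
      using piece_partition_cover[OF P'] piece_partitionD(2)[OF P B] by blast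
    ultimately show "B \<in> P'"
      using piece_partition_unique[OF P B] \<open>P' \<subseteq> P\<close> by blast
  qed
qed fact

lemma piece_partition_Un:
  assumes P: "piece_partition U P" and R: "piece_partition V R" and "U \<inter> V = {}"
  shows "piece_partition (U \<union> V) (P \<union> R) \<and> card (P \<union> R) = card P + card R"
proof -
  have cross: "A \<inter> B = {}" if "A \<in> P" "B \<in> R" for A B
    using piece_partitionD(2)[OF P that(1)] piece_partitionD(2)[OF R that(2)] \<open>U \<inter> V = {}\<close> by blast
  have "P \<inter> R = {}"
    using cross piece_partitionD(1)[OF P] by blast
  moreover have "A \<inter> B = {}" if "A \<in> P \<union> R" "B \<in> P \<union> R" "A \<noteq> B" for A B
  proof -
    have "\<forall>A\<in>P. \<forall>B\<in>P. A \<noteq> B \<longrightarrow> A \<inter> B = {}" "\<forall>A\<in>R. \<forall>B\<in>R. A \<noteq> B \<longrightarrow> A \<inter> B = {}"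
      using P R unfolding piece_partition_def by simp_all
    then show ?thesis
      using that cross[of A B] cross[of B A] by blast
  qed
  ultimately show ?thesis
    using P R unfolding piece_partition_def by (auto simp: card_Un_disjoint)
qed

definition attach :: "nat set set \<Rightarrow> nat \<Rightarrow> nat set \<Rightarrow> nat set set" where
  "attach P x Y = (\<lambda>A. if x \<in> A then A \<union> Y else A) ` P"

lemma attach_empty: "attach P x {} = P"
  unfolding attach_def by auto

lemma piece_partition_attach:
  assumes P: "piece_partition U P" and "x \<in> U" "Y \<inter> U = {}" "piece Y" "y \<in> Y" "adjacent x y"
  shows "piece_partition (U \<union> Y) (attach P x Y) \<and> card (attach P x Y) = card P"
proof -
  define f where "f A = (if x \<in> A then A \<union> Y else A)" for A
  have attach_eq: "attach P x Y = f ` P"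
    by (simp add: attach_def f_def)
  have f_Diff: "f A - Y = A" if "A \<in> P" for A
    using piece_partitionD(2)[OF P that] assms(3) unfolding f_def by auto
  have inj: "inj_on f P"
    by (rule inj_on_inverseI[where g = "\<lambda>B. B - Y"]) (rule f_Diff)
  obtain A0 where "A0 \<in> P" "x \<in> A0"
    using piece_partition_cover[OF P \<open>x \<in> U\<close>] by blast
  then have "\<Union>(f ` P) = U \<union> Y"
    using P unfolding piece_partition_def f_def by (auto split: if_splits)
  moreover have "f A \<inter> f B = {}" if "A \<in> P" "B \<in> P" "f A \<noteq> f B" for A B
  proof -
    have "A \<noteq> B"
      using that(3) by blast
    then have "A \<inter> B = {}"
      using P that(1,2) unfolding piece_partition_def by blast
    then have "\<not> (x \<in> A \<and> x \<in> B)"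
      by blast
    then show ?thesis
      using \<open>A \<inter> B = {}\<close> f_Diff[OF that(1)] f_Diff[OF that(2)] unfolding f_def by auto
  qed
  then have "\<forall>X\<in>f ` P. \<forall>Z\<in>f ` P. X \<noteq> Z \<longrightarrow> X \<inter> Z = {}"
    by blast
  moreover have "piece (f A)" if "A \<in> P" for A
    using connected_set_Un[of A Y x y] P assms(4-6) that
    unfolding f_def piece_def piece_partition_def by auto
  then have "\<forall>X\<in>f ` P. piece X"
    by blast
  ultimately show ?thesis
    using P card_image[OF inj] unfolding piece_partition_def attach_eq by simp
qed

section \<open>Deleting the last column\<close>

definition column :: "nat \<Rightarrow> nat set" where
  "column i = {2*i, 2*i+1}"

definition drop_column :: "nat \<Rightarrow> nat set set \<Rightarrow> nat set set" where
  "drop_column n P = (\<lambda>A. A - column n) ` P - {{}}"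

lemma board_Suc: "board (Suc n) = board n \<union> column n"
  unfolding board_def column_def by auto

lemma board_Int_column: "board n \<inter> column n = {}"
  unfolding board_def column_def by auto

lemma adjacent_column: "adjacent (2*n) (2*n+1)"
  unfolding adjacent_def by auto

lemma piece_column: "piece (column n)"
  unfolding column_def by (rule piece_adjacent_pair[OF adjacent_column])

lemma adjacent_column_left:
  assumes "v \<in> column n" "w < 2*n" "adjacent v w"
  shows "w = v - 2"
proof -
  have v: "v div 2 = n" "v = 2 * n + v mod 2"
    using assms(1) unfolding column_def by auto
  then have "w mod 2 = v mod 2 \<and> w div 2 + 1 = n"
    using assms(2,3) unfolding adjacent_def by auto
  then show ?thesis
    using v div_mult_mod_eq[of w 2] by linarith
qed

context
  fixes n :: nat
  assumes n_pos: "n \<ge> 1"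
begin

lemma column_pred_in_board: "2*n-2 \<in> board n" "2*n-1 \<in> board n"
  using n_pos unfolding board_def by auto

lemma column_pred_notin_column: "2*n-2 \<notin> column n" "2*n-1 \<notin> column n"
  using n_pos unfolding column_def by auto

lemma adjacent_column_pred: "adjacent (2*n-2) (2*n-1)"
proof -
  obtain m where "n = Suc m" using n_pos not0_implies_Suc by fastforce
  then show ?thesis unfolding adjacent_def by simp
qed

lemma adjacent_into_column: "adjacent (2*n-2) (2*n)" "adjacent (2*n-1) (2*n+1)"
proof -
  obtain m where "n = Suc m" using n_pos not0_implies_Suc by fastforce
  then show "adjacent (2*n-2) (2*n)" "adjacent (2*n-1) (2*n+1)"
    unfolding adjacent_def by simp_all
qed

text \<open>A path that enters the last column must leave it again through the squares 2n-2 and 2n-1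
  of the previous column, and these two are adjacent.\<close>
lemma rtrancl_adj_within_Diff_column:
  assumes sub: "A \<subseteq> board (Suc n)" and path: "(u, v) \<in> (adj_within A)\<^sup>*"
    and u: "u \<in> A - column n"
  shows "(v \<notin> column n \<longrightarrow> (u, v) \<in> (adj_within (A - column n))\<^sup>*) \<and>
         (v \<in> column n \<longrightarrow>
            (\<exists>w\<in>(A - column n) \<inter> {2*n-2, 2*n-1}. (u, w) \<in> (adj_within (A - column n))\<^sup>*))"
proof -
  define A' where "A' = A - column n"
  define L where "L = {2*n-2, 2*n-1}"
  have left: "w \<in> L" if "v \<in> column n" "w \<in> A'" "adjacent v w" for v w
  proof -
    have "w < 2*n"
      using sub that(2) unfolding A'_def board_def column_def by auto
    then show ?thesis
      using adjacent_column_left[OF that(1) _ that(3)] that(1) unfolding L_def column_def by auto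
  qed
  have L_reach: "(w, w') \<in> (adj_within A')\<^sup>*" if "w \<in> A' \<inter> L" "w' \<in> A' \<inter> L" for w w'
  proof (cases "w = w'")
    case False
    then have "adjacent w w'"
      using that adjacent_column_pred adjacent_sym unfolding L_def by auto
    then show ?thesis
      using that unfolding adj_within_def by auto
  qed simp
  from path have "(v \<notin> column n \<longrightarrow> (u, v) \<in> (adj_within A')\<^sup>*) \<and>
                  (v \<in> column n \<longrightarrow> (\<exists>w\<in>A' \<inter> L. (u, w) \<in> (adj_within A')\<^sup>*))"
  proof (induction rule: rtrancl_induct)
    case base
    then show ?case using u unfolding A'_def by blast
  next
    case (step y z)
    then have yz: "y \<in> A" "z \<in> A" "adjacent y z" "adjacent z y"
      by (auto simp: adj_within_def adjacent_sym)
    consider "y \<in> A'" "z \<in> A'" | "y \<in> A'" "z \<in> column n" | "y \<in> column n" "z \<in> A'"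
      | "y \<in> column n" "z \<in> column n"
      using yz unfolding A'_def by blast
    then show ?case
    proof cases
      case 1
      then have "(y, z) \<in> adj_within A'"
        using yz unfolding adj_within_def by blast
      then show ?thesis
        using step.IH 1 unfolding A'_def by (meson DiffD2 rtrancl.rtrancl_into_rtrancl)
    next
      case 2
      then show ?thesis
        using step.IH left[of z y] yz unfolding A'_def by blast
    next
      case 3
      then obtain w where "w \<in> A' \<inter> L" "(u, w) \<in> (adj_within A')\<^sup>*"
        using step.IH unfolding A'_def by blast
      moreover have "z \<in> A' \<inter> L"
        using 3 left[of y z] yz by blast
      ultimately show ?thesis
        using 3 L_reach rtrancl_trans unfolding A'_def by (metis DiffD2)
    next
      case 4
      then show ?thesis
        using step.IH by blast
    qed
  qed
  then show ?thesis
    unfolding A'_def L_def .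
qed

lemma connected_set_Diff_column:
  assumes "A \<subseteq> board (Suc n)" "connected_set A"
  shows "connected_set (A - column n)"
  unfolding connected_set_iff
proof (intro ballI)
  fix u v assume "u \<in> A - column n" "v \<in> A - column n"
  then show "(u, v) \<in> (adj_within (A - column n))\<^sup>*"
    using rtrancl_adj_within_Diff_column[OF assms(1) _ \<open>u \<in> A - column n\<close>] assms(2)
    unfolding connected_set_iff by blast
qed

lemma piece_partition_drop_column:
  assumes P: "piece_partition (board (Suc n)) P"
  shows "piece_partition (board n) (drop_column n P)"
proof -
  have "\<Union>(drop_column n P) = \<Union>P - column n"
    unfolding drop_column_def by blast
  also have "\<dots> = board n"
    using P board_Int_column unfolding piece_partition_def board_Suc by blast
  finally have "\<Union>(drop_column n P) = board n" .
  moreover have "piece X" if "X \<in> drop_column n P" for X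
    using that connected_set_Diff_column piece_partitionD[OF P]
    unfolding drop_column_def piece_def by auto
  moreover have "X \<inter> Z = {}"
    if X: "X \<in> drop_column n P" and Z: "Z \<in> drop_column n P" and "X \<noteq> Z" for X Z
  proof -
    obtain A B where "A \<in> P" "B \<in> P" "X = A - column n" "Z = B - column n"
      using X Z unfolding drop_column_def by blast
    moreover then have "A \<inter> B = {}"
      using piece_partition_unique[OF P] \<open>X \<noteq> Z\<close> by blast
    ultimately show ?thesis
      by blast
  qed
  moreover have "finite (drop_column n P)"
    using P unfolding piece_partition_def drop_column_def by simp
  ultimately show ?thesis
    unfolding piece_partition_def by blast
qed

lemma piece_contains_left_neighbour:
  assumes P: "piece_partition (board (Suc n)) P" and "A \<in> P" "v \<in> A" "v \<in> column n"
    and "\<not> A \<subseteq> column n"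
  shows "\<exists>u\<in>A \<inter> column n. u - 2 \<in> A"
proof -
  obtain y where "y \<in> A" "y \<notin> column n"
    using assms(5) by blast
  then obtain u w where uw: "u \<in> A \<inter> column n" "w \<in> A - column n" "adjacent u w"
    using connected_set_crossing_edge[of A v "column n" y] piece_partitionD(3)[OF P] assms(2-4)
    by blast
  then have "w < 2*n"
    using piece_partitionD(2)[OF P assms(2)] unfolding board_def column_def by auto
  then show ?thesis
    using adjacent_column_left[of u n w] uw by auto
qed

end

section \<open>Shapes of the last column\<close>

text \<open>How the squares 2n (top) and 2n+1 (bottom) of column n of board (n+1) lie in a division,
  relative to the pieces of the squares 2n-2 and 2n-1 to their left.\<close>
datatype column_shape =
  Two_Singletons | Domino | Top_Singleton | Bottom_Singleton | Both_Attached
  | Domino_Attached_Top | Domino_Attached_Bottom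

lemma UNIV_column_shape:
  "UNIV = {Two_Singletons, Domino, Top_Singleton, Bottom_Singleton, Both_Attached,
           Domino_Attached_Top, Domino_Attached_Bottom}"
  using column_shape.exhaust by auto

text \<open>Squares of column n that join the piece of 2n-2, resp. of 2n-1.\<close>
fun attached_top :: "nat \<Rightarrow> column_shape \<Rightarrow> nat set" where
  "attached_top n Bottom_Singleton = {2*n}"
| "attached_top n Both_Attached = {2*n}"
| "attached_top n Domino_Attached_Top = {2*n, 2*n+1}"
| "attached_top n _ = {}"

fun attached_bottom :: "nat \<Rightarrow> column_shape \<Rightarrow> nat set" where
  "attached_bottom n Top_Singleton = {2*n+1}"
| "attached_bottom n Both_Attached = {2*n+1}"
| "attached_bottom n Domino_Attached_Bottom = {2*n, 2*n+1}"
| "attached_bottom n _ = {}"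

fun new_pieces :: "nat \<Rightarrow> column_shape \<Rightarrow> nat set set" where
  "new_pieces n Two_Singletons = {{2*n}, {2*n+1}}"
| "new_pieces n Domino = {{2*n, 2*n+1}}"
| "new_pieces n Top_Singleton = {{2*n}}"
| "new_pieces n Bottom_Singleton = {{2*n+1}}"
| "new_pieces n _ = {}"

text \<open>The shapes that can only arise when 2n-2 and 2n-1 lie in different pieces; if they lie in
  the same piece, both extensions coincide with the one of shape Domino_Attached_Top.\<close>
fun requires_split :: "column_shape \<Rightarrow> bool" where
  "requires_split Both_Attached = True"
| "requires_split Domino_Attached_Bottom = True"
| "requires_split _ = False"

definition attached_part :: "nat \<Rightarrow> column_shape \<Rightarrow> nat set \<Rightarrow> nat set" where
  "attached_part n c A =
     (if 2*n-2 \<in> A then attached_top n c else {}) \<union> (if 2*n-1 \<in> A then attached_bottom n c else {})"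

definition extend_piece :: "nat \<Rightarrow> column_shape \<Rightarrow> nat set \<Rightarrow> nat set" where
  "extend_piece n c A = A \<union> attached_part n c A"

definition extend :: "nat \<Rightarrow> column_shape \<Rightarrow> nat set set \<Rightarrow> nat set set" where
  "extend n c Q = extend_piece n c ` Q \<union> new_pieces n c"

definition separates_last_column :: "nat \<Rightarrow> nat set set \<Rightarrow> bool" where
  "separates_last_column n P \<longleftrightarrow> (\<forall>A\<in>P. \<not> (2*n-2 \<in> A \<and> 2*n-1 \<in> A))"

definition has_shape :: "nat \<Rightarrow> column_shape \<Rightarrow> nat set set \<Rightarrow> bool" where
  "has_shape n c P \<longleftrightarrow>
     extend n c (drop_column n P) = P \<and> (requires_split c \<longrightarrow> separates_last_column n P)"

lemma attached_subset_column:
  "attached_top n c \<subseteq> column n" "attached_bottom n c \<subseteq> column n"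
  by (cases c; simp add: column_def)+

lemma attached_top_cases:
  "attached_top n c = {} \<or> piece (attached_top n c) \<and> 2*n \<in> attached_top n c"
  using piece_column[unfolded column_def] by (cases c) (simp_all add: piece_singleton)

lemma attached_bottom_cases:
  "attached_bottom n c = {} \<or> piece (attached_bottom n c) \<and> 2*n+1 \<in> attached_bottom n c"
  using piece_column[unfolded column_def] by (cases c) (simp_all add: piece_singleton)

lemma piece_partition_new_pieces:
  "piece_partition (column n - attached_top n c - attached_bottom n c) (new_pieces n c)"
  by (cases c)
    (use piece_column[unfolded column_def] in
      \<open>auto simp: piece_partition_def column_def piece_singleton\<close>)

lemma attached_disjoint: "attached_top n c \<inter> attached_bottom n c = {}"
  by (cases c) auto

lemma new_pieces_subset_column: "X \<in> new_pieces n c \<Longrightarrow> X \<subseteq> column n"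
  by (cases c) (auto simp: column_def)

lemma card_new_pieces_le: "card (new_pieces n c) \<le> 2"
  by (cases c) (simp_all add: card_insert_if)

lemma column_shape_eqI:
  assumes "new_pieces n c = new_pieces n c'"
    and "attached_top n c \<union> attached_bottom n c = attached_top n c' \<union> attached_bottom n c'"
    and "requires_split c \<or> requires_split c' \<longrightarrow> attached_top n c = attached_top n c'"
  shows "c = c'"
  using assms by (cases c; cases c') (auto simp: doubleton_eq_iff)

context
  fixes n :: nat
  assumes n_pos: "n \<ge> 1"
begin

lemma extend_piece_Diff_column:
  "extend_piece n c (A - column n) = A - column n \<union> attached_part n c A"
  using column_pred_notin_column[OF n_pos] unfolding extend_piece_def attached_part_def by simp

lemma extend_piece_image:
  "extend_piece n c ` Q =
     attach (attach Q (2*n-2) (attached_top n c)) (2*n-1) (attached_bottom n c)"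
proof -
  have "2*n-1 \<notin> attached_top n c"
    using attached_subset_column column_pred_notin_column[OF n_pos] by blast
  then show ?thesis
    unfolding attach_def image_image extend_piece_def attached_part_def by (intro image_cong) auto
qed

lemma piece_partition_extend:
  assumes Q: "piece_partition (board n) Q"
  shows "piece_partition (board (Suc n)) (extend n c Q) \<and>
         card (extend n c Q) = card Q + card (new_pieces n c)"
proof -
  let ?T = "attached_top n c" and ?B = "attached_bottom n c"
  have attach_step: "piece_partition (U \<union> Y) (attach R x Y) \<and> card (attach R x Y) = card R"
    if "piece_partition U R" "x \<in> U" "Y \<inter> U = {}" "Y = {} \<or> piece Y \<and> y \<in> Y" "adjacent x y"
    for U R x Y y
    using piece_partition_attach[OF that(1-3)] that(1,4,5) attach_empty by auto
  have disj: "?T \<inter> board n = {}" "?B \<inter> (board n \<union> ?T) = {}"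
    using attached_subset_column attached_disjoint board_Int_column by blast+
  have T: "piece_partition (board n \<union> ?T) (attach Q (2*n-2) ?T) \<and>
           card (attach Q (2*n-2) ?T) = card Q"
    by (rule attach_step[OF Q column_pred_in_board(1)[OF n_pos] disj(1) attached_top_cases
          adjacent_into_column(1)[OF n_pos]])
  have "piece_partition (board n \<union> ?T \<union> ?B) (extend_piece n c ` Q) \<and>
        card (extend_piece n c ` Q) = card Q"
    unfolding extend_piece_image
    using attach_step[OF T[THEN conjunct1] _ disj(2) attached_bottom_cases
        adjacent_into_column(2)[OF n_pos]] T column_pred_in_board(2)[OF n_pos] by auto
  moreover have "board n \<union> ?T \<union> ?B \<union> (column n - ?T - ?B) = board (Suc n)"
    using attached_subset_column[of n c] board_Suc[of n] by auto
  moreover have "(board n \<union> ?T \<union> ?B) \<inter> (column n - ?T - ?B) = {}"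
    using board_Int_column by blast
  ultimately show ?thesis
    using piece_partition_Un[OF _ piece_partition_new_pieces] unfolding extend_def by metis
qed

lemma extend_piece_Diff_column_self: "A \<subseteq> board n \<Longrightarrow> extend_piece n c A - column n = A"
  using attached_subset_column[of n c] board_Int_column[of n]
  unfolding extend_piece_def attached_part_def by (auto split: if_splits)

lemma drop_column_extend:
  assumes Q: "piece_partition (board n) Q"
  shows "drop_column n (extend n c Q) = Q"
proof -
  have "(\<lambda>X. X - column n) ` extend_piece n c ` Q = Q"
    using extend_piece_Diff_column_self piece_partitionD(2)[OF Q] by (simp add: image_image)
  moreover have "(\<lambda>X. X - column n) ` new_pieces n c \<subseteq> {{}}"
    using new_pieces_subset_column by blast
  moreover have "{} \<notin> Q"
    using piece_partitionD(1)[OF Q] by blast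
  ultimately show ?thesis
    unfolding drop_column_def extend_def image_Un by blast
qed

lemma separates_drop_column:
  "separates_last_column n (drop_column n P) \<longleftrightarrow> separates_last_column n P"
  using column_pred_notin_column[OF n_pos]
  unfolding separates_last_column_def drop_column_def by auto

lemma has_shape_extend:
  assumes "piece_partition (board n) Q" "requires_split c \<longrightarrow> separates_last_column n Q"
  shows "has_shape n c (extend n c Q)"
  using assms drop_column_extend[OF assms(1)] separates_drop_column[of "extend n c Q"]
  unfolding has_shape_def by simp

lemma has_shapeI:
  assumes P: "piece_partition (board (Suc n)) P" and "new_pieces n c \<subseteq> P"
    and "\<And>A. A \<in> P \<Longrightarrow> \<not> A \<subseteq> column n \<Longrightarrow> extend_piece n c (A - column n) = A"
    and "requires_split c \<longrightarrow> separates_last_column n P"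
  shows "has_shape n c P"
proof -
  let ?Q = "drop_column n P"
  have "extend_piece n c (A - column n) \<in> P" if "A \<in> P" "A - column n \<noteq> {}" for A
    using assms(3)[OF that(1)] that by (metis Diff_eq_empty_iff)
  then have "extend n c ?Q \<subseteq> P"
    using assms(2) unfolding extend_def drop_column_def by blast
  then have "extend n c ?Q = P"
    using piece_partition_subset_eq[OF P]
      piece_partition_extend[OF piece_partition_drop_column[OF n_pos P]] by blast
  then show ?thesis
    using assms(4) unfolding has_shape_def by blast
qed

lemma extend_piece_Diff_column_eq_iff:
  "extend_piece n c (A - column n) = A \<longleftrightarrow>
     (2*n \<in> A \<longleftrightarrow> 2*n-2 \<in> A \<and> 2*n \<in> attached_top n c \<or> 2*n-1 \<in> A \<and> 2*n \<in> attached_bottom n c) \<and>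
     (2*n+1 \<in> A \<longleftrightarrow> 2*n-2 \<in> A \<and> 2*n+1 \<in> attached_top n c \<or> 2*n-1 \<in> A \<and> 2*n+1 \<in> attached_bottom n c)"
  unfolding extend_piece_Diff_column attached_part_def using attached_subset_column[of n c]
  by (auto simp: column_def)

lemma has_shape_exists_joined:
  assumes P: "piece_partition (board (Suc n)) P" and A0: "A0 \<in> P" "2*n \<in> A0" "2*n+1 \<in> A0"
  shows "\<exists>c. has_shape n c P"
proof -
  have same: "x \<in> A \<longleftrightarrow> y \<in> A" if "A \<in> P" "x \<in> A0" "y \<in> A0" for A x y
    using piece_partition_unique[OF P that(1) A0(1)] that by blast
  show ?thesis
  proof (cases "A0 \<subseteq> column n")
    case True
    then have "A0 = column n"
      using A0 unfolding column_def by auto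
    have "has_shape n Domino P"
    proof (rule has_shapeI[OF P])
      fix A assume "A \<in> P" "\<not> A \<subseteq> column n"
      then have "2*n \<notin> A" "2*n+1 \<notin> A"
        using piece_partition_unique[OF P _ A0(1)] A0 True by blast+
      then show "extend_piece n Domino (A - column n) = A"
        unfolding extend_piece_Diff_column_eq_iff by simp
    qed (use A0 \<open>A0 = column n\<close> in \<open>simp_all add: column_def\<close>)
    then show ?thesis ..
  next
    case False
    then obtain u where "u \<in> A0 \<inter> column n" "u - 2 \<in> A0"
      using piece_contains_left_neighbour[OF n_pos P A0(1,2)] A0(2) unfolding column_def by blast
    then have "2*n-2 \<in> A0 \<or> 2*n-1 \<in> A0"
      unfolding column_def by auto
    moreover have "has_shape n Domino_Attached_Top P" if "2*n-2 \<in> A0"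
    proof (rule has_shapeI[OF P])
      fix A assume "A \<in> P"
      then show "extend_piece n Domino_Attached_Top (A - column n) = A"
        unfolding extend_piece_Diff_column_eq_iff
        using same[OF \<open>A \<in> P\<close> A0(2) that] same[OF \<open>A \<in> P\<close> A0(3) that] by simp
    qed simp_all
    moreover have "has_shape n Domino_Attached_Bottom P" if "2*n-2 \<notin> A0" "2*n-1 \<in> A0"
    proof (rule has_shapeI[OF P])
      fix A assume "A \<in> P"
      then show "extend_piece n Domino_Attached_Bottom (A - column n) = A"
        unfolding extend_piece_Diff_column_eq_iff
        using same[OF \<open>A \<in> P\<close> A0(2) that(2)] same[OF \<open>A \<in> P\<close> A0(3) that(2)] by simp
    next
      show "requires_split Domino_Attached_Bottom \<longrightarrow> separates_last_column n P"
        using piece_partition_unique[OF P _ A0(1)] that unfolding separates_last_column_def by blast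
    qed simp
    ultimately show ?thesis
      by blast
  qed
qed

lemma piece_meeting_column_once:
  assumes P: "piece_partition (board (Suc n)) P" and "A \<in> P" "A \<inter> column n = {v}"
  shows "A = {v} \<or> v - 2 \<in> A"
proof (cases "A \<subseteq> column n")
  case True
  then show ?thesis
    using assms(3) by blast
next
  case False
  then show ?thesis
    using piece_contains_left_neighbour[OF n_pos P assms(2), of v] assms(3) by auto
qed

lemma mem_piece_meeting_column_once:
  assumes P: "piece_partition (board (Suc n)) P" and A0: "A0 \<in> P" "A0 \<inter> column n = {v}"
    and A: "A \<in> P" "\<not> A \<subseteq> column n"
  shows "v \<in> A \<longleftrightarrow> A0 \<noteq> {v} \<and> v - 2 \<in> A"
  using piece_meeting_column_once[OF P A0] piece_partition_unique[OF P A(1) A0(1)] A0(2) A(2)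
  by blast

lemma has_shape_exists_apart:
  assumes P: "piece_partition (board (Suc n)) P"
    and A0: "A0 \<in> P" "A0 \<inter> column n = {2*n}" and A1: "A1 \<in> P" "A1 \<inter> column n = {2*n+1}"
  shows "\<exists>c. has_shape n c P"
proof -
  define c where "c = (if A0 = {2*n} then if A1 = {2*n+1} then Two_Singletons else Top_Singleton
                       else if A1 = {2*n+1} then Bottom_Singleton else Both_Attached)"
  have "has_shape n c P"
  proof (rule has_shapeI[OF P])
    show "new_pieces n c \<subseteq> P"
      using A0(1) A1(1) unfolding c_def by auto
    show "extend_piece n c (A - column n) = A" if "A \<in> P" "\<not> A \<subseteq> column n" for A
      unfolding extend_piece_Diff_column_eq_iff c_def
        mem_piece_meeting_column_once[OF P A0 that] mem_piece_meeting_column_once[OF P A1 that]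
      by auto
    show "requires_split c \<longrightarrow> separates_last_column n P"
    proof
      assume "requires_split c"
      then have "2*n-2 \<in> A0" "2*n-1 \<in> A1"
        using piece_meeting_column_once[OF P A0] piece_meeting_column_once[OF P A1]
        unfolding c_def by (auto split: if_splits)
      moreover have "A0 \<noteq> A1"
        using A0(2) A1(2) by auto
      ultimately show "separates_last_column n P"
        using piece_partition_unique[OF P] A0(1) A1(1) unfolding separates_last_column_def by blast
    qed
  qed
  then show ?thesis ..
qed

lemma has_shape_exists:
  assumes P: "piece_partition (board (Suc n)) P"
  shows "\<exists>c. has_shape n c P"
proof -
  obtain A0 A1 where A0: "A0 \<in> P" "2*n \<in> A0" and A1: "A1 \<in> P" "2*n+1 \<in> A1"
    using piece_partition_cover[OF P, of "2*n"] piece_partition_cover[OF P, of "2*n+1"]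
    unfolding board_def by auto
  show ?thesis
  proof (cases "A0 = A1")
    case True
    then show ?thesis
      using has_shape_exists_joined[OF P A0] A1 by blast
  next
    case False
    then have "A0 \<inter> column n = {2*n}" "A1 \<inter> column n = {2*n+1}"
      using piece_partition_unique[OF P] A0 A1 unfolding column_def by blast+
    then show ?thesis
      using has_shape_exists_apart[OF P A0(1) _ A1(1)] by blast
  qed
qed

lemma extend_piece_Int_column: "A \<subseteq> board n \<Longrightarrow> extend_piece n c A \<inter> column n = attached_part n c A"
  using attached_subset_column[of n c] board_Int_column[of n]
  unfolding extend_piece_def attached_part_def by auto

lemma extend_eqD:
  assumes Q: "piece_partition (board n) Q" and eq: "extend n c Q = extend n c' Q"
  shows "new_pieces n c = new_pieces n c'"
    and "A \<in> Q \<Longrightarrow> extend_piece n c A = extend_piece n c' A"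
proof -
  have restore: "extend_piece n d A - column n = A" if "A \<in> Q" for A d
    using extend_piece_Diff_column_self[OF piece_partitionD(2)[OF Q that]] .
  have outside: "\<not> extend_piece n d A \<subseteq> column n" if "A \<in> Q" for A d
    using restore[OF that, of d] piece_partitionD(1)[OF Q that] by auto
  have "new_pieces n d = {X \<in> extend n d Q. X \<subseteq> column n}" for d
    using outside new_pieces_subset_column[of _ n d] unfolding extend_def by blast
  then show "new_pieces n c = new_pieces n c'"
    using eq by simp
  assume A: "A \<in> Q"
  then have "extend_piece n c A \<in> extend_piece n c' ` Q"
    using eq outside[OF A] new_pieces_subset_column[of "extend_piece n c A" n c']
    unfolding extend_def by blast
  then obtain A' where A': "A' \<in> Q" "extend_piece n c A = extend_piece n c' A'"
    by blast
  then have "A' = A"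
    using restore[OF A, of c] restore[OF A'(1), of c'] by simp
  then show "extend_piece n c A = extend_piece n c' A"
    using A'(2) by simp
qed

lemma has_shape_unique:
  assumes P: "piece_partition (board (Suc n)) P" and c: "has_shape n c P" and c': "has_shape n c' P"
  shows "c = c'"
proof -
  let ?Q = "drop_column n P"
  have Q: "piece_partition (board n) ?Q"
    by (rule piece_partition_drop_column[OF n_pos P])
  have ext: "extend n c ?Q = P" "extend n c' ?Q = P"
    using c c' unfolding has_shape_def by blast+
  then have eq: "extend n c ?Q = extend n c' ?Q"
    by simp
  have column_part: "attached_part n c A = attached_part n c' A" if "A \<in> ?Q" for A
    using extend_eqD(2)[OF Q eq that] extend_piece_Int_column[OF piece_partitionD(2)[OF Q that]]
    by metis
  obtain At where At: "At \<in> ?Q" "2*n-2 \<in> At"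
    using piece_partition_cover[OF Q column_pred_in_board(1)[OF n_pos]] by blast
  obtain Ab where Ab: "Ab \<in> ?Q" "2*n-1 \<in> Ab"
    using piece_partition_cover[OF Q column_pred_in_board(2)[OF n_pos]] by blast
  show ?thesis
  proof (cases "2*n-1 \<in> At")
    case True
    have "extend_piece n c At \<in> P"
      using ext(1) At(1) unfolding extend_def by blast
    moreover have "2*n-2 \<in> extend_piece n c At" "2*n-1 \<in> extend_piece n c At"
      using At(2) True unfolding extend_piece_def by simp_all
    ultimately have "\<not> separates_last_column n P"
      unfolding separates_last_column_def by blast
    then have "\<not> requires_split c" "\<not> requires_split c'"
      using c c' unfolding has_shape_def by blast+
    moreover have
      "attached_top n c \<union> attached_bottom n c = attached_top n c' \<union> attached_bottom n c'"
      using column_part[OF At(1)] At(2) True unfolding attached_part_def by simp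
    ultimately show ?thesis
      using extend_eqD(1)[OF Q eq] by (blast intro: column_shape_eqI)
  next
    case False
    then have "2*n-2 \<notin> Ab"
      using piece_partition_unique[OF Q At(1) Ab(1)] At(2) Ab(2) by blast
    then have "attached_top n c = attached_top n c'" "attached_bottom n c = attached_bottom n c'"
      using column_part[OF At(1)] column_part[OF Ab(1)] At(2) Ab(2) False
      unfolding attached_part_def by simp_all
    then show ?thesis
      using extend_eqD(1)[OF Q eq] by (blast intro: column_shape_eqI)
  qed
qed

section \<open>Counting divisions by shape\<close>

lemma card_divisions_with_shape:
  assumes "card (new_pieces n c) \<le> k"
  shows "card {P. division (Suc n) k P \<and> has_shape n c P} =
         card {Q. division n (k - card (new_pieces n c)) Q \<and>
                  (requires_split c \<longrightarrow> separates_last_column n Q)}"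
proof (rule bij_betw_same_card[OF
      bij_betw_byWitness[where f = "drop_column n" and f' = "extend n c"]])
  show "\<forall>P\<in>{P. division (Suc n) k P \<and> has_shape n c P}. extend n c (drop_column n P) = P"
    unfolding has_shape_def by blast
  show "\<forall>Q\<in>{Q. division n (k - card (new_pieces n c)) Q \<and>
                (requires_split c \<longrightarrow> separates_last_column n Q)}.
          drop_column n (extend n c Q) = Q"
    using drop_column_extend by (simp add: division_iff)
  show "drop_column n ` {P. division (Suc n) k P \<and> has_shape n c P} \<subseteq>
        {Q. division n (k - card (new_pieces n c)) Q \<and>
            (requires_split c \<longrightarrow> separates_last_column n Q)}"
  proof clarify
    fix P assume "division (Suc n) k P" "has_shape n c P"
    then have P: "piece_partition (board (Suc n)) P" "card P = k"
      and ext: "extend n c (drop_column n P) = P"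
      and split: "requires_split c \<longrightarrow> separates_last_column n P"
      unfolding division_iff has_shape_def by blast+
    have "card P = card (drop_column n P) + card (new_pieces n c)"
      using piece_partition_extend[OF piece_partition_drop_column[OF n_pos P(1)], of c] ext by simp
    then show "division n (k - card (new_pieces n c)) (drop_column n P) \<and>
               (requires_split c \<longrightarrow> separates_last_column n (drop_column n P))"
      using P split piece_partition_drop_column[OF n_pos P(1)] separates_drop_column
      by (simp add: division_iff)
  qed
  show "extend n c ` {Q. division n (k - card (new_pieces n c)) Q \<and>
          (requires_split c \<longrightarrow> separates_last_column n Q)} \<subseteq>
        {P. division (Suc n) k P \<and> has_shape n c P}"
    using piece_partition_extend has_shape_extend assms by (auto simp: division_iff)
qed

lemma d_Suc_eq_sum_shapes:
  "d k (Suc n) = (\<Sum>c\<in>UNIV. card {P. division (Suc n) k P \<and> has_shape n c P})"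
proof -
  define C where "C c = {P. division (Suc n) k P \<and> has_shape n c P}" for c
  have "{P. division (Suc n) k P} = (\<Union>c. C c)"
    using has_shape_exists unfolding C_def by (auto simp: division_iff)
  then have "d k (Suc n) = card (\<Union>c. C c)"
    unfolding d_def by simp
  also have "\<dots> = (\<Sum>c\<in>UNIV. card (C c))"
  proof (rule card_UN_disjoint)
    show "finite (UNIV :: column_shape set)"
      by (simp add: UNIV_column_shape)
    show "\<forall>c\<in>UNIV. finite (C c)"
      using finite_divisions unfolding C_def by (auto intro: finite_subset[rotated])
    show "\<forall>c\<in>UNIV. \<forall>c'\<in>UNIV. c \<noteq> c' \<longrightarrow> C c \<inter> C c' = {}"
      using has_shape_unique unfolding C_def by (auto simp: division_iff)
  qed
  finally show ?thesis
    unfolding C_def .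
qed

end

theorem theorem1:
  fixes n k :: nat
  assumes "n \<ge> 1" and "k \<ge> 2"
  shows "d k (n + 1) = d (k - 2) n + 3 * d (k - 1) n + d k n + 2 * s k n"
proof -
  have "d k (n + 1) = (\<Sum>c\<in>UNIV. card {P. division (Suc n) k P \<and> has_shape n c P})"
    using d_Suc_eq_sum_shapes[OF assms(1)] by simp
  also have "\<dots> = (\<Sum>c\<in>UNIV. card {Q. division n (k - card (new_pieces n c)) Q \<and>
                                        (requires_split c \<longrightarrow> separates_last_column n Q)})"
    using card_divisions_with_shape[OF assms(1)] card_new_pieces_le assms(2) le_trans
    by (intro sum.cong) blast+
  also have "\<dots> = d (k - 2) n + 3 * d (k - 1) n + d k n + 2 * s k n"
    by (simp add: UNIV_column_shape card_insert_if numeral_2_eq_2[symmetric] d_def s_def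
        separates_last_column_def)
  finally show ?thesis .
qed

end
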